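(* Let $\gamma>0$. There exists a sequence of positive numbers $(\alpha_n)_{n\ge2}$ such that, with the convention $\alpha_1=0$, $$\sup_{n\ge2}\Big\{(1+2\nu_n)\Big(p_n+\frac{|q_n|}{\alpha_n}+|q_{n-1}|\,\alpha_{n-1}\Big)\Big\}<1 .$$
   Context: For $\gamma>0$ and integers $n\ge1$ define $\nu_n=\nu_n(\gamma)=(-1)^n\frac{\Gamma(2\gamma)\Gamma(n+\gamma)}{\Gamma(\gamma)\Gamma(n+2\gamma)}$, $p_n=p_n(\gamma)=\frac{2n(n-1)+(6n-4)\gamma+6\gamma^2}{(2n+3\gamma)(2n+3\gamma-2)}=\frac12+\frac{-\gamma+\frac32\gamma^2}{(2n+3\gamma)(2n+3\gamma-2)}$, $q_n=q_n(\gamma)=-\frac{1}{2n+3\gamma}\sqrt{\frac{(n+3\gamma-1)(n+1)(n+\gamma)}{(2n+3\gamma+1)(2n+3\gamma-1)}}$. (These arise from the Jacobi polynomials orthogonal for Beta$(\gamma,2\gamma)$: $p_n$ and $q_n$ are the diagonal and normalized off-diagonal entries of multiplication by $1-u$.) *)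

theory Defs
  imports "HOL-Analysis.Analysis"
begin

definition nu :: "real \<Rightarrow> nat \<Rightarrow> real" where
  "nu \<gamma> n = (-1) ^ n * (Gamma (2*\<gamma>) * Gamma (real n + \<gamma>)) /
                (Gamma \<gamma> * Gamma (real n + 2*\<gamma>))"

definition p :: "real \<Rightarrow> nat \<Rightarrow> real" where
  "p \<gamma> n = (2 * real n * (real n - 1) + (6 * real n - 4) * \<gamma> + 6 * \<gamma>^2) /
              ((2 * real n + 3*\<gamma>) * (2 * real n + 3*\<gamma> - 2))"

definition q :: "real \<Rightarrow> nat \<Rightarrow> real" where
  "q \<gamma> n = - (1 / (2 * real n + 3*\<gamma>)) *
     sqrt (((real n + 3*\<gamma> - 1) * (real n + 1) * (real n + \<gamma>)) /
           ((2 * real n + 3*\<gamma> + 1) * (2 * real n + 3*\<gamma> - 1)))"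

end

theory Submission
  imports Defs
begin

text \<open>Write \<open>\<nu>\<^sub>n = (-1)\<^sup>n \<rho>\<^sub>n\<close> with \<open>\<rho>\<^sub>n = (\<gamma>)\<^sub>n / (2\<gamma>)\<^sub>n\<close>. Since \<open>\<rho>\<close> decreases from
  \<open>\<rho>\<^sub>1 = 1/2\<close>, the factor \<open>1 + 2\<nu>\<^sub>n\<close> lies in \<open>(0,1)\<close> for odd \<open>n \<ge> 3\<close> and equals \<open>2 - w\<^sub>n\<close>
  with \<open>w\<^sub>n = 1 - 2\<rho>\<^sub>n \<ge> \<gamma>/(2\<gamma>+1)\<close> for even \<open>n\<close>.
  With \<open>\<theta> = 49/100\<close> the weights are chosen so that both off-diagonal terms of an odd row equal
  \<open>\<theta>(1 - p\<^sub>n)/(1 + 2\<nu>\<^sub>n)\<close>; as \<open>p\<^sub>n \<le> 2/3\<close>, an odd row is then at most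
  \<open>p\<^sub>n + 2\<theta>(1 - p\<^sub>n) \<le> 1 - 1/150\<close>.
  In an even row the off-diagonal terms inherit the factors \<open>1 + 2\<nu>\<^sub>n\<^sub>-\<^sub>1\<close> and
  \<open>1 + 2\<nu>\<^sub>n\<^sub>+\<^sub>1\<close> of the neighbouring odd rows, both at most \<open>w\<^sub>n(1 + (2\<gamma>+1)/(2\<gamma>+n))\<close>,
  and rational estimates bound their sum by \<open>\<theta> w\<^sub>n \<mu>\<^sub>n\<close>, where
  \<open>\<mu>\<^sub>n\<close> is slightly smaller than \<open>p\<^sub>n\<close> and satisfies \<open>w\<^sub>n \<mu>\<^sub>n \<le> 1 - (2 - w\<^sub>n) p\<^sub>n\<close>. Hence an even
  row is at most \<open>(2 - w\<^sub>n)(p\<^sub>n + \<theta> w\<^sub>n \<mu>\<^sub>n) \<le> 1 - (1 - 2\<theta>) w\<^sub>n \<mu>\<^sub>n\<close>, which stays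
  away from \<open>1\<close> because \<open>\<mu>\<^sub>n \<ge> 2/(2+3\<gamma>)\<^sup>2\<close>.\<close>

definition rho :: "real \<Rightarrow> nat \<Rightarrow> real" where
  "rho \<gamma> n = pochhammer \<gamma> n / pochhammer (2*\<gamma>) n"

lemma nu_eq_rho:
  assumes "\<gamma> > 0"
  shows "nu \<gamma> n = (-1)^n * rho \<gamma> n"
proof -
  have "\<gamma> \<notin> \<int>\<^sub>\<le>\<^sub>0" "2*\<gamma> \<notin> \<int>\<^sub>\<le>\<^sub>0"
    using assms by (auto dest: nonpos_Ints_nonpos)
  then have "rho \<gamma> n = (Gamma (\<gamma> + n) / Gamma \<gamma>) / (Gamma (2*\<gamma> + n) / Gamma (2*\<gamma>))"
    unfolding rho_def by (simp add: pochhammer_Gamma)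
  then show ?thesis
    unfolding nu_def by (simp add: add.commute)
qed

lemma rho_Suc: "rho \<gamma> (Suc n) = rho \<gamma> n * ((\<gamma> + n) / (2*\<gamma> + n))"
  unfolding rho_def pochhammer_Suc by simp

lemma rho_pos: "\<gamma> > 0 \<Longrightarrow> rho \<gamma> n > 0"
  unfolding rho_def by (simp add: pochhammer_pos)

lemma rho_antimono:
  assumes "\<gamma> > 0" "m \<le> n"
  shows "rho \<gamma> n \<le> rho \<gamma> m"
  using assms(2)
proof (induction n rule: dec_induct)
  case (step n)
  have "rho \<gamma> (Suc n) \<le> rho \<gamma> n"
    unfolding rho_Suc using rho_pos[OF assms(1)] assms(1)
    by (intro mult_left_le) (auto simp: less_imp_le)
  with step.IH show ?case by linarith
qed simp

lemma one_minus_two_rho_ge: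
  assumes "\<gamma> > 0" "n \<ge> 2"
  shows "\<gamma> / (2*\<gamma> + 1) \<le> 1 - 2 * rho \<gamma> n"
proof -
  have "rho \<gamma> 2 = (\<gamma> * (\<gamma> + 1)) / ((2*\<gamma>) * (2*\<gamma> + 1))"
    unfolding rho_def numeral_2_eq_2 pochhammer_Suc by simp
  also have "\<dots> = (\<gamma> + 1) / (2 * (2*\<gamma> + 1))"
    using assms(1) by simp
  finally have "2 * rho \<gamma> 2 = 1 - \<gamma> / (2*\<gamma> + 1)"
    using assms(1) by (simp add: field_simps)
  then show ?thesis
    using rho_antimono[OF assms(1,2)] by linarith
qed

lemma rho_less_half:
  assumes "\<gamma> > 0" "n \<ge> 2"
  shows "rho \<gamma> n < 1/2"
proof -
  have "\<gamma> / (2*\<gamma> + 1) > 0"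
    using assms(1) by simp
  with one_minus_two_rho_ge[OF assms] show ?thesis
    by linarith
qed

text \<open>\<open>\<mu>\<close> is \<open>p\<close> with the term \<open>6\<gamma>\<^sup>2\<close> of its numerator dropped, and \<open>\<kappa>\<close> is the factor
  left in \<open>q\<^sub>n\<^sup>2\<close> after splitting off \<open>(n + \<gamma>)/(2n + 3\<gamma>)\<close>.\<close>

definition kappa :: "real \<Rightarrow> real \<Rightarrow> real" where
  "kappa \<gamma> x = (x + 3*\<gamma> - 1) * (x + 1) / ((2*x + 3*\<gamma>) * (2*x + 3*\<gamma> - 1) * (2*x + 3*\<gamma> + 1))"

definition mu :: "real \<Rightarrow> real \<Rightarrow> real" where
  "mu \<gamma> x = 2 * (x * (x - 1) + (3*x - 2) * \<gamma>) / ((2*x + 3*\<gamma>) * (2*x + 3*\<gamma> - 2))"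

lemma kappa_nonneg:
  assumes "\<gamma> > 0" "x \<ge> 1"
  shows "kappa \<gamma> x \<ge> 0"
  unfolding kappa_def using assms by (intro divide_nonneg_pos mult_nonneg_nonneg mult_pos_pos) auto

lemma abs_q_squared:
  assumes "\<gamma> > 0" "n \<ge> 1"
  shows "\<bar>q \<gamma> n\<bar>^2 = kappa \<gamma> n * ((real n + \<gamma>) / (2 * real n + 3*\<gamma>))"
proof -
  define x where "x = real n"
  define t where "t = 2*x + 3*\<gamma>"
  have x: "x \<ge> 1" and t: "t > 2"
    using assms unfolding x_def t_def by simp_all
  have rad: "(x + 3*\<gamma> - 1) * (x + 1) * (x + \<gamma>) / ((t + 1) * (t - 1)) \<ge> 0"
    using x t assms(1) by (intro divide_nonneg_pos mult_nonneg_nonneg) auto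
  have "\<bar>q \<gamma> n\<bar>^2 = (x + 3*\<gamma> - 1) * (x + 1) * (x + \<gamma>) / ((t + 1) * (t - 1)) / t^2"
    unfolding q_def power2_abs x_def[symmetric] t_def[symmetric] using rad
    by (simp add: power_mult_distrib power_divide add_ac)
  also have "\<dots> = kappa \<gamma> x * ((x + \<gamma>) / t)"
    unfolding kappa_def t_def[symmetric] by (simp add: power2_eq_square mult_ac)
  finally show ?thesis
    unfolding x_def t_def .
qed

lemma abs_q_pos:
  assumes "\<gamma> > 0" "n \<ge> 1"
  shows "\<bar>q \<gamma> n\<bar> > 0"
proof -
  have "\<bar>q \<gamma> n\<bar>^2 > 0"
    unfolding abs_q_squared[OF assms] kappa_def using assms
    by (intro mult_pos_pos divide_pos_pos) auto
  then show ?thesis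
    by (simp add: zero_less_power2)
qed

lemma p_pos:
  assumes "\<gamma> > 0" "n \<ge> 1"
  shows "p \<gamma> n > 0"
  unfolding p_def using assms
  by (intro divide_pos_pos mult_pos_pos add_nonneg_pos add_nonneg_nonneg) auto

lemma p_le_two_thirds:
  assumes "\<gamma> > 0" "n \<ge> 1"
  shows "p \<gamma> n \<le> 2/3"
proof -
  have "(2*real n + 3*\<gamma>) * (2*real n + 3*\<gamma> - 2) > 0"
    using assms by (intro mult_pos_pos) auto
  moreover have "real n \<le> real n * real n" "0 \<le> \<gamma> * real n"
    using assms by auto
  ultimately show ?thesis
    unfolding p_def by (simp add: divide_le_eq algebra_simps power2_eq_square)
qed

lemma one_minus_p_ge:
  assumes "\<gamma> > 0" "n \<ge> 1"
  shows "(real n + \<gamma>) / (2 * real n + 3*\<gamma>) \<le> 1 - p \<gamma> n"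
proof -
  define x where "x = real n"
  define t where "t = 2*x + 3*\<gamma>"
  define D where "D = t * (t - 2)"
  have x: "x \<ge> 1" and t: "t > 2"
    using assms unfolding x_def t_def by simp_all
  then have D: "D > 0"
    unfolding D_def by simp
  have "(x + \<gamma>) / t = (x + \<gamma>) * (t - 2) / D"
    unfolding D_def using t by simp
  moreover have "p \<gamma> n = (D - x * \<gamma> - (x + \<gamma>) * (t - 2)) / D"
    unfolding p_def x_def[symmetric] D_def t_def by (simp add: algebra_simps power2_eq_square)
  ultimately have "1 - p \<gamma> n - (x + \<gamma>) / t = x * \<gamma> / D"
    using D by (simp add: field_simps)
  moreover have "x * \<gamma> / D \<ge> 0"
    using x D assms(1) by simp
  ultimately show ?thesis
    unfolding x_def t_def by linarith
qed

lemma one_minus_p_Suc_ge: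
  assumes "\<gamma> > 0"
  shows "(real n + \<gamma>) / (2 * real n + 3*\<gamma>) \<le> 1 - p \<gamma> (Suc n)"
proof -
  define x where "x = real n"
  define t where "t = 2*x + 3*\<gamma>"
  define D where "D = (t + 2) * t"
  have x: "x \<ge> 0" and t: "t > 0"
    using assms unfolding x_def t_def by simp_all
  then have D: "D > 0"
    unfolding D_def by simp
  have "(x + \<gamma>) / t = (x + \<gamma>) * (t + 2) / D"
    unfolding D_def using t by simp
  moreover have "p \<gamma> (Suc n) = (D - \<gamma> * (x + 2) - (x + \<gamma>) * (t + 2)) / D"
    unfolding p_def of_nat_Suc x_def[symmetric] D_def t_def by (simp add: algebra_simps power2_eq_square)
  ultimately have "1 - p \<gamma> (Suc n) - (x + \<gamma>) / t = \<gamma> * (x + 2) / D"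
    using D by (simp add: field_simps)
  moreover have "\<gamma> * (x + 2) / D \<ge> 0"
    using x D assms by simp
  ultimately show ?thesis
    unfolding x_def t_def by linarith
qed

lemma abs_q_squared_div_le_kappa:
  assumes "\<gamma> > 0" "n \<ge> 1" and m: "(real n + \<gamma>) / (2 * real n + 3*\<gamma>) \<le> 1 - p \<gamma> m"
  shows "\<bar>q \<gamma> n\<bar>^2 / (1 - p \<gamma> m) \<le> kappa \<gamma> n"
proof -
  have "(real n + \<gamma>) / (2 * real n + 3*\<gamma>) > 0"
    using assms(1) by simp
  with m have P: "1 - p \<gamma> m > 0"
    by linarith
  have "kappa \<gamma> n \<ge> 0"
    using kappa_nonneg[OF assms(1)] assms(2) by simp
  with m have "kappa \<gamma> n * ((real n + \<gamma>) / (2 * real n + 3*\<gamma>)) \<le> kappa \<gamma> n * (1 - p \<gamma> m)"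
    by (rule mult_left_mono)
  then show ?thesis
    unfolding abs_q_squared[OF assms(1,2)] pos_divide_le_eq[OF P] .
qed

lemma mu_mult_le_one_minus_p:
  assumes "\<gamma> > 0" "n \<ge> 1" and w: "\<gamma> / (2*\<gamma> + 1) \<le> w"
  shows "w * mu \<gamma> n \<le> 1 - (2 - w) * p \<gamma> n"
proof -
  define x where "x = real n"
  define D where "D = (2*x + 3*\<gamma>) * (2*x + 3*\<gamma> - 2)"
  define N where "N = 2*x*(x - 1) + (6*x - 4)*\<gamma> + 6*\<gamma>^2"
  have D: "D > 0"
    using assms(1,2) unfolding D_def x_def by (intro mult_pos_pos) auto
  have pmu: "p \<gamma> n = N / D" "mu \<gamma> n = (N - 6*\<gamma>^2) / D"
    unfolding p_def mu_def N_def D_def x_def by (simp_all add: algebra_simps)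
  have "1 - (2 - w) * p \<gamma> n - w * mu \<gamma> n = (D - 2*N + 6*w*\<gamma>^2) / D"
    unfolding pmu using D by (simp add: field_simps)
  also have "D - 2*N + 6*w*\<gamma>^2 = \<gamma> * (2 - 3*\<gamma> + 6*w*\<gamma>)"
    unfolding D_def N_def by (simp add: algebra_simps power2_eq_square)
  finally have "1 - (2 - w) * p \<gamma> n - w * mu \<gamma> n = \<gamma> * (2 - 3*\<gamma> + 6*w*\<gamma>) / D" .
  moreover have "2 - 3*\<gamma> + 6*w*\<gamma> > 0"
  proof -
    have "\<gamma> \<le> w * (2*\<gamma> + 1)"
      using w assms(1) by (simp add: field_simps)
    then have "6*\<gamma> * \<gamma> \<le> 6*\<gamma> * (w * (2*\<gamma> + 1))"
      using assms(1) by (intro mult_left_mono) auto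
    moreover have "(2 - 3*\<gamma> + 6*w*\<gamma>) * (2*\<gamma> + 1) = 2 + \<gamma> - 6*\<gamma> * \<gamma> + 6*\<gamma> * (w * (2*\<gamma> + 1))"
      by (simp add: algebra_simps)
    ultimately have "(2 - 3*\<gamma> + 6*w*\<gamma>) * (2*\<gamma> + 1) \<ge> 2 + \<gamma>"
      by linarith
    then show ?thesis
      using assms(1) zero_less_mult_pos2[of "2 - 3*\<gamma> + 6*w*\<gamma>" "2*\<gamma> + 1"] by linarith
  qed
  then have "\<gamma> * (2 - 3*\<gamma> + 6*w*\<gamma>) / D > 0"
    using assms(1) D by simp
  ultimately show ?thesis
    by linarith
qed

text \<open>The next three bounds are proved by clearing denominators: the difference of the two
  sides then becomes a polynomial with nonnegative coefficients in \<open>\<gamma>\<close> and in the distance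
  \<open>s\<close> of \<open>x\<close> from the left end of its range.\<close>

lemma mu_ge:
  assumes "x \<ge> 2" "\<gamma> > 0"
  shows "2 / (2 + 3*\<gamma>)^2 \<le> mu \<gamma> x"
proof -
  define s where "s = x - 2"
  define t where "t = 2*x + 3*\<gamma>"
  have s: "s \<ge> 0" and t: "t > 2"
    using assms unfolding s_def t_def by simp_all
  have "2 * (x * (x - 1) + (3*x - 2) * \<gamma>) * (2 + 3*\<gamma>)^2 - 2 * (t * (t - 2))
      = 44 * \<gamma> + 114 * \<gamma>^2 + 72 * \<gamma>^3 + 72 * s * \<gamma> + 126 * s * \<gamma>^2 + 54 * s * \<gamma>^3
        + 24 * s^2 * \<gamma> + 18 * s^2 * \<gamma>^2"
    unfolding t_def s_def by algebra
  also have "\<dots> \<ge> 0"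
    using s assms(2) by (intro add_nonneg_nonneg mult_nonneg_nonneg zero_le_power; simp)
  finally have "2 * (t * (t - 2)) \<le> 2 * (x * (x - 1) + (3*x - 2) * \<gamma>) * (2 + 3*\<gamma>)^2"
    by linarith
  then show ?thesis
    unfolding mu_def t_def[symmetric] using t assms(2) by (simp add: divide_simps)
qed

lemma kappa_sum_le_mu:
  assumes "x \<ge> 4" "\<gamma> > 0"
  shows "kappa \<gamma> (x - 1) + 2 * kappa \<gamma> x \<le> (49/100)^2 * mu \<gamma> x"
proof -
  define s where "s = x - 4"
  define t where "t = 2*x + 3*\<gamma>"
  define a1 where "a1 = (x + 3*\<gamma> - 2) * x"
  define a2 where "a2 = (x + 3*\<gamma> - 1) * (x + 1)"
  define d1 where "d1 = (t - 2) * (t - 3) * (t - 1)"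
  define d2 where "d2 = t * (t - 1) * (t + 1)"
  define m where "m = 2 * (x * (x - 1) + (3*x - 2) * \<gamma>)"
  define dm where "dm = t * (t - 2)"
  have s: "s \<ge> 0" and t: "t \<ge> 8"
    using assms unfolding s_def t_def by simp_all
  then have d1: "d1 > 0" and d2: "d2 > 0" and dm: "dm > 0"
    unfolding d1_def d2_def dm_def by (auto intro!: mult_pos_pos)
  have "2401 * m * d1 * d2 - 10000 * (a1 * d2 + 2 * a2 * d1) * dm
     = 1139564160 + 4249773936 * \<gamma> + 8293738464 * \<gamma>^2 + 9227185380 * \<gamma>^3
       + 5936515920 * \<gamma>^4 + 2188233144 * \<gamma>^5 + 430040016 * \<gamma>^6 + 35006580 * \<gamma>^7
       + 3889637184 * s + 13646619468 * s * \<gamma> + 21807697938 * s * \<gamma>^2 + 18792630126 * s * \<gamma>^3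
       + 9042732540 * s * \<gamma>^4 + 2355043248 * s * \<gamma>^5 + 289688562 * s * \<gamma>^6 + 10501974 * s * \<gamma>^7
       + 5346916648 * s ^ 2 + 16390585316 * s ^ 2 * \<gamma> + 21114072450 * s ^ 2 * \<gamma>^2 + 13892227920 * s ^ 2 * \<gamma>^3
       + 4781888460 * s ^ 2 * \<gamma>^4 + 790306956 * s ^ 2 * \<gamma>^5 + 45508554 * s ^ 2 * \<gamma>^6
       + 3968727536 * s ^ 3 + 10131127152 * s ^ 3 * \<gamma> + 10154156160 * s ^ 3 * \<gamma>^2 + 4833228960 * s ^ 3 * \<gamma>^3
       + 1066130640 * s ^ 3 * \<gamma>^4 + 84015792 * s ^ 3 * \<gamma>^5
       + 1765594152 * s ^ 4 + 3571999040 * s ^ 4 * \<gamma> + 2618468640 * s ^ 4 * \<gamma>^2 + 805191840 * s ^ 4 * \<gamma>^3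
       + 85571640 * s ^ 4 * \<gamma>^4
       + 486533696 * s ^ 5 + 728225664 * s ^ 5 * \<gamma> + 347490720 * s ^ 5 * \<gamma>^2 + 51861600 * s ^ 5 * \<gamma>^3
       + 81592512 * s ^ 6 + 80120768 * s ^ 6 * \<gamma> + 18670176 * s ^ 6 * \<gamma>^2
       + 7645184 * s ^ 7 + 3687936 * s ^ 7 * \<gamma>
       + 307328 * s ^ 8"
    unfolding a1_def a2_def d1_def d2_def m_def dm_def t_def s_def by algebra
  also have "\<dots> \<ge> 0"
    using s assms(2) by (intro add_nonneg_nonneg mult_nonneg_nonneg zero_le_power; simp)
  finally have cleared: "10000 * (a1 * d2 + 2 * a2 * d1) * dm \<le> 2401 * m * d1 * d2"
    by linarith
  have "kappa \<gamma> (x - 1) + 2 * kappa \<gamma> x = a1 / d1 + 2 * (a2 / d2)"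
    unfolding kappa_def a1_def a2_def d1_def d2_def t_def by (simp add: algebra_simps)
  also have "\<dots> \<le> (49/100)^2 * (m / dm)"
    using cleared d1 d2 dm by (simp add: divide_simps) (simp add: algebra_simps)
  also have "m / dm = mu \<gamma> x"
    unfolding mu_def m_def dm_def t_def by (simp add: algebra_simps)
  finally show ?thesis .
qed

lemma kappa_two_le_mu:
  assumes "\<gamma> > 0"
  shows "(1 + (2*\<gamma> + 1) / (2*\<gamma> + 2)) * kappa \<gamma> 2 \<le> (49/100)^2 * mu \<gamma> 2"
proof -
  define t where "t = 4 + 3*\<gamma>"
  have t: "t \<ge> 4"
    using assms unfolding t_def by simp
  have "2401 * (2 * (2 + 4*\<gamma>)) * (2*\<gamma> + 2) * (t * (t - 1) * (t + 1))
      - 10000 * (4*\<gamma> + 3) * ((1 + 3*\<gamma>) * 3) * (t * (t - 2))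
     = 432480 + 1425768*\<gamma> + 1794408*\<gamma>^2 + 2168664*\<gamma>^3 + 2464776*\<gamma>^4 + 1037232*\<gamma>^5"
    unfolding t_def by algebra
  also have "\<dots> \<ge> 0"
    using assms by (intro add_nonneg_nonneg mult_nonneg_nonneg zero_le_power; simp)
  finally have cleared: "10000 * (4*\<gamma> + 3) * ((1 + 3*\<gamma>) * 3) * (t * (t - 2))
      \<le> 2401 * (2 * (2 + 4*\<gamma>)) * (2*\<gamma> + 2) * (t * (t - 1) * (t + 1))"
    by linarith
  have "(1 + (2*\<gamma> + 1) / (2*\<gamma> + 2)) * kappa \<gamma> 2
      = (4*\<gamma> + 3) / (2*\<gamma> + 2) * ((1 + 3*\<gamma>) * 3 / (t * (t - 1) * (t + 1)))"
    unfolding kappa_def t_def using assms by (simp add: field_simps)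
  also have "\<dots> \<le> (49/100)^2 * (2 * (2 + 4*\<gamma>) / (t * (t - 2)))"
    using cleared t assms by (simp add: divide_simps) (simp add: algebra_simps)
  also have "2 * (2 + 4*\<gamma>) / (t * (t - 2)) = mu \<gamma> 2"
    unfolding mu_def t_def by (simp add: algebra_simps)
  finally show ?thesis .
qed

lemma one_plus_two_nu_even: "\<gamma> > 0 \<Longrightarrow> even n \<Longrightarrow> 1 + 2 * nu \<gamma> n = 1 + 2 * rho \<gamma> n"
  by (simp add: nu_eq_rho)

lemma one_plus_two_nu_odd: "\<gamma> > 0 \<Longrightarrow> odd n \<Longrightarrow> 1 + 2 * nu \<gamma> n = 1 - 2 * rho \<gamma> n"
  by (simp add: nu_eq_rho)

lemma one_plus_two_nu_odd_pos:
  assumes "\<gamma> > 0" "n \<ge> 2" "odd n"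
  shows "1 + 2 * nu \<gamma> n > 0"
  using one_plus_two_nu_odd[OF assms(1,3)] rho_less_half[OF assms(1,2)] by simp

lemma one_plus_two_nu_Suc_le:
  assumes "\<gamma> > 0" "n \<ge> 2" "even n"
  shows "1 + 2 * nu \<gamma> (Suc n) \<le> (1 - 2 * rho \<gamma> n) * (1 + (2*\<gamma> + 1) / (2*\<gamma> + n))"
proof -
  have d: "2*\<gamma> + n > 0"
    using assms(1) by simp
  have "1 + 2 * nu \<gamma> (Suc n) = (1 - 2 * rho \<gamma> n) + 2 * rho \<gamma> n * (\<gamma> / (2*\<gamma> + n))"
    using assms(3) d by (simp add: one_plus_two_nu_odd[OF assms(1)] rho_Suc field_simps)
  also have "\<dots> \<le> (1 - 2 * rho \<gamma> n) + 1 * (\<gamma> / (2*\<gamma> + n))"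
    using rho_less_half[OF assms(1,2)] assms(1) d by (intro add_left_mono mult_right_mono) auto
  also have "\<gamma> / (2*\<gamma> + n) = \<gamma> / (2*\<gamma> + 1) * ((2*\<gamma> + 1) / (2*\<gamma> + n))"
    using assms(1) by simp
  also have "\<dots> \<le> (1 - 2 * rho \<gamma> n) * ((2*\<gamma> + 1) / (2*\<gamma> + n))"
    using one_minus_two_rho_ge[OF assms(1,2)] assms(1) d by (intro mult_right_mono) auto
  finally show ?thesis
    by (simp add: algebra_simps)
qed

definition alpha :: "real \<Rightarrow> nat \<Rightarrow> real" where
  "alpha \<gamma> n =
    (if n < 2 then 0
     else if even n then (49/100) * (1 - p \<gamma> (n + 1)) / (\<bar>q \<gamma> n\<bar> * (1 + 2 * nu \<gamma> (n + 1)))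
     else \<bar>q \<gamma> n\<bar> * (1 + 2 * nu \<gamma> n) / ((49/100) * (1 - p \<gamma> n)))"

lemma alpha_pos:
  assumes "\<gamma> > 0" "n \<ge> 2"
  shows "alpha \<gamma> n > 0"
proof (cases "even n")
  case True
  then have "1 + 2 * nu \<gamma> (n + 1) > 0" "1 - p \<gamma> (n + 1) > 0"
    using one_plus_two_nu_odd_pos[OF assms(1), of "n + 1"] p_le_two_thirds[OF assms(1), of "n + 1"]
      assms(2) by auto
  with True show ?thesis
    unfolding alpha_def using abs_q_pos[OF assms(1)] assms(2) by simp
next
  case False
  then have "1 + 2 * nu \<gamma> n > 0" "1 - p \<gamma> n > 0"
    using one_plus_two_nu_odd_pos[OF assms] p_le_two_thirds[OF assms(1), of n] assms(2) by auto
  with False show ?thesis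
    unfolding alpha_def using abs_q_pos[OF assms(1)] assms(2) by simp
qed

lemma odd_row_le:
  assumes "\<gamma> > 0" "n \<ge> 2" "odd n"
  shows "(1 + 2 * nu \<gamma> n) * (p \<gamma> n + \<bar>q \<gamma> n\<bar> / alpha \<gamma> n + \<bar>q \<gamma> (n - 1)\<bar> * alpha \<gamma> (n - 1))
    \<le> 1 - 1/150"
proof -
  define a where "a = 1 + 2 * nu \<gamma> n"
  have a: "0 < a" "a \<le> 1"
    unfolding a_def using one_plus_two_nu_odd_pos[OF assms] one_plus_two_nu_odd[OF assms(1,3)]
      rho_pos[OF assms(1), of n] by auto
  have n: "n \<ge> 3" "even (n - 1)" "n - 1 + 1 = n"
    using assms(2,3) by presburger+
  have P: "p \<gamma> n > 0" "p \<gamma> n \<le> 2/3"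
    using p_pos[OF assms(1)] p_le_two_thirds[OF assms(1)] assms(2) by auto
  have Q: "\<bar>q \<gamma> n\<bar> > 0" "\<bar>q \<gamma> (n - 1)\<bar> > 0"
    using abs_q_pos[OF assms(1)] n(1) by auto
  have alpha: "alpha \<gamma> n = \<bar>q \<gamma> n\<bar> * a / ((49/100) * (1 - p \<gamma> n))"
    "alpha \<gamma> (n - 1) = (49/100) * (1 - p \<gamma> n) / (\<bar>q \<gamma> (n - 1)\<bar> * a)"
    unfolding alpha_def a_def using assms(3) n by simp_all
  have "\<bar>q \<gamma> n\<bar> / alpha \<gamma> n = (49/100) * (1 - p \<gamma> n) / a"
    "\<bar>q \<gamma> (n - 1)\<bar> * alpha \<gamma> (n - 1) = (49/100) * (1 - p \<gamma> n) / a"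
    unfolding alpha using Q a P by (simp_all add: field_simps)
  then have "a * (p \<gamma> n + \<bar>q \<gamma> n\<bar> / alpha \<gamma> n + \<bar>q \<gamma> (n - 1)\<bar> * alpha \<gamma> (n - 1))
      = a * p \<gamma> n + (98/100) * (1 - p \<gamma> n)"
    using a by (simp add: field_simps)
  also have "\<dots> \<le> p \<gamma> n + (98/100) * (1 - p \<gamma> n)"
    using a P by (simp add: mult_left_le_one_le)
  also have "\<dots> = 98/100 + p \<gamma> n / 50"
    by (simp add: field_simps)
  also have "\<dots> \<le> 1 - 1/150"
    using P by linarith
  finally show ?thesis
    unfolding a_def .
qed

lemma abs_q_div_alpha_even_le:
  assumes "\<gamma> > 0" "n \<ge> 2" "even n"
  shows "\<bar>q \<gamma> n\<bar> / alpha \<gamma> n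
    \<le> (1 - 2 * rho \<gamma> n) * (1 + (2*\<gamma> + 1) / (2*\<gamma> + n)) / (49/100) * kappa \<gamma> n"
proof -
  define Q where "Q = \<bar>q \<gamma> n\<bar>"
  have pos: "Q > 0" "1 + 2 * nu \<gamma> (n + 1) > 0" "1 - p \<gamma> (n + 1) > 0"
    unfolding Q_def using abs_q_pos[OF assms(1)] one_plus_two_nu_odd_pos[OF assms(1), of "n + 1"]
      p_le_two_thirds[OF assms(1), of "n + 1"] assms(2,3) by auto
  have "Q / alpha \<gamma> n = (1 + 2 * nu \<gamma> (n + 1)) / (49/100) * (Q^2 / (1 - p \<gamma> (n + 1)))"
    unfolding alpha_def Q_def[symmetric] using pos assms(2,3) by (simp add: field_simps power2_eq_square)
  also have "\<dots> \<le> (1 + 2 * nu \<gamma> (n + 1)) / (49/100) * kappa \<gamma> n"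
    unfolding Q_def using abs_q_squared_div_le_kappa[OF assms(1) _ one_minus_p_Suc_ge[OF assms(1)], of n]
      pos assms(2) by (intro mult_left_mono) simp_all
  also have "\<dots> \<le> (1 - 2 * rho \<gamma> n) * (1 + (2*\<gamma> + 1) / (2*\<gamma> + n)) / (49/100) * kappa \<gamma> n"
    using one_plus_two_nu_Suc_le[OF assms] kappa_nonneg[OF assms(1), of n] assms(2)
    by (intro mult_right_mono divide_right_mono) auto
  finally show ?thesis
    unfolding Q_def .
qed

lemma abs_q_mult_alpha_odd_le:
  assumes "\<gamma> > 0" "n \<ge> 2" "odd n"
  shows "\<bar>q \<gamma> n\<bar> * alpha \<gamma> n \<le> (1 - 2 * rho \<gamma> (n + 1)) / (49/100) * kappa \<gamma> n"
proof -
  define Q where "Q = \<bar>q \<gamma> n\<bar>"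
  have "Q * alpha \<gamma> n = (1 + 2 * nu \<gamma> n) / (49/100) * (Q^2 / (1 - p \<gamma> n))"
    unfolding alpha_def Q_def[symmetric] using assms(2,3) by (simp add: field_simps power2_eq_square)
  also have "\<dots> \<le> (1 + 2 * nu \<gamma> n) / (49/100) * kappa \<gamma> n"
  proof (rule mult_left_mono)
    have n: "n \<ge> 1"
      using assms(2) by simp
    show "Q^2 / (1 - p \<gamma> n) \<le> kappa \<gamma> n"
      unfolding Q_def by (rule abs_q_squared_div_le_kappa[OF assms(1) n one_minus_p_ge[OF assms(1) n]])
    show "0 \<le> (1 + 2 * nu \<gamma> n) / (49/100)"
      using one_plus_two_nu_odd_pos[OF assms] by simp
  qed
  also have "\<dots> \<le> (1 - 2 * rho \<gamma> (n + 1)) / (49/100) * kappa \<gamma> n"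
    unfolding one_plus_two_nu_odd[OF assms(1,3)] using rho_antimono[OF assms(1), of n "n + 1"]
      kappa_nonneg[OF assms(1), of n] assms(2) by (intro mult_right_mono divide_right_mono) auto
  finally show ?thesis
    unfolding Q_def .
qed

lemma even_off_diagonal_le:
  assumes "\<gamma> > 0" "n \<ge> 2" "even n"
  shows "\<bar>q \<gamma> n\<bar> / alpha \<gamma> n + \<bar>q \<gamma> (n - 1)\<bar> * alpha \<gamma> (n - 1)
    \<le> (49/100) * ((1 - 2 * rho \<gamma> n) * mu \<gamma> n)"
proof -
  define w where "w = 1 - 2 * rho \<gamma> n"
  define c where "c = 1 + (2*\<gamma> + 1) / (2*\<gamma> + n)"
  have w: "w > 0"
    using rho_less_half[OF assms(1,2)] unfolding w_def by simp
  have first: "\<bar>q \<gamma> n\<bar> / alpha \<gamma> n \<le> w * c / (49/100) * kappa \<gamma> n"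
    using abs_q_div_alpha_even_le[OF assms] unfolding w_def c_def .
  show ?thesis
  proof (cases "n = 2")
    case True
    then have "\<bar>q \<gamma> n\<bar> / alpha \<gamma> n + \<bar>q \<gamma> (n - 1)\<bar> * alpha \<gamma> (n - 1) \<le> w / (49/100) * (c * kappa \<gamma> 2)"
      using first by (simp add: alpha_def)
    also have "\<dots> \<le> w / (49/100) * ((49/100)^2 * mu \<gamma> 2)"
      using kappa_two_le_mu[OF assms(1)] w True unfolding c_def by (intro mult_left_mono) (auto simp: add_ac)
    also have "\<dots> = (49/100) * (w * mu \<gamma> 2)"
      by (simp add: power2_eq_square)
    finally show ?thesis
      using True by (simp add: w_def)
  next
    case False
    then have n: "n \<ge> 4" "odd (n - 1)" "n - 1 \<ge> 2" "n - 1 + 1 = n" "real (n - 1) = real n - 1"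
      using assms(2,3) by (auto simp: of_nat_diff)
    have second: "\<bar>q \<gamma> (n - 1)\<bar> * alpha \<gamma> (n - 1) \<le> w / (49/100) * kappa \<gamma> (real n - 1)"
      using abs_q_mult_alpha_odd_le[OF assms(1) n(3,2)] unfolding n(4,5) w_def .
    have "c \<le> 2"
      unfolding c_def using assms(1) n(1) by simp
    then have "w * c / (49/100) * kappa \<gamma> n \<le> w / (49/100) * (2 * kappa \<gamma> n)"
      using w kappa_nonneg[OF assms(1), of n] n(1) by (simp add: mult_left_mono mult_right_mono)
    with first second have "\<bar>q \<gamma> n\<bar> / alpha \<gamma> n + \<bar>q \<gamma> (n - 1)\<bar> * alpha \<gamma> (n - 1)
        \<le> w / (49/100) * (kappa \<gamma> (real n - 1) + 2 * kappa \<gamma> n)"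
      by (simp add: algebra_simps)
    also have "\<dots> \<le> w / (49/100) * ((49/100)^2 * mu \<gamma> n)"
      using kappa_sum_le_mu[OF _ assms(1), of n] w n(1) by (intro mult_left_mono) auto
    also have "\<dots> = (49/100) * (w * mu \<gamma> n)"
      by (simp add: power2_eq_square)
    finally show ?thesis
      unfolding w_def .
  qed
qed

lemma even_row_le:
  assumes "\<gamma> > 0" "n \<ge> 2" "even n"
  shows "(1 + 2 * nu \<gamma> n) * (p \<gamma> n + \<bar>q \<gamma> n\<bar> / alpha \<gamma> n + \<bar>q \<gamma> (n - 1)\<bar> * alpha \<gamma> (n - 1))
    \<le> 1 - \<gamma> / (25 * (2*\<gamma> + 1) * (2 + 3*\<gamma>)^2)"
proof -
  define w where "w = 1 - 2 * rho \<gamma> n"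
  define m where "m = mu \<gamma> n"
  define b where "b = \<gamma> / (2*\<gamma> + 1) * (2 / (2 + 3*\<gamma>)^2)"
  have w: "\<gamma> / (2*\<gamma> + 1) \<le> w" "w \<le> 1"
    using one_minus_two_rho_ge[OF assms(1,2)] rho_pos[OF assms(1), of n] unfolding w_def by auto
  have "2 / (2 + 3*\<gamma>)^2 \<le> m"
    using mu_ge[of n] assms unfolding m_def by simp
  moreover have nonneg: "0 \<le> \<gamma> / (2*\<gamma> + 1)" "0 \<le> 2 / (2 + 3*\<gamma>)^2"
    using assms(1) by simp_all
  ultimately have wm: "b \<le> w * m" "b \<ge> 0"
    unfolding b_def using w(1) by (intro mult_mono mult_nonneg_nonneg nonneg; linarith)+
  have row: "p \<gamma> n + \<bar>q \<gamma> n\<bar> / alpha \<gamma> n + \<bar>q \<gamma> (n - 1)\<bar> * alpha \<gamma> (n - 1)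
      \<le> p \<gamma> n + (49/100) * (w * m)"
    using even_off_diagonal_le[OF assms] unfolding w_def m_def by linarith
  have "1 + 2 * nu \<gamma> n = 2 - w"
    unfolding one_plus_two_nu_even[OF assms(1,3)] w_def by simp
  then have "(1 + 2 * nu \<gamma> n) * (p \<gamma> n + \<bar>q \<gamma> n\<bar> / alpha \<gamma> n + \<bar>q \<gamma> (n - 1)\<bar> * alpha \<gamma> (n - 1))
      \<le> (2 - w) * (p \<gamma> n + (49/100) * (w * m))"
    using mult_left_mono[OF row, of "2 - w"] w(2) by simp
  also have "\<dots> = (2 - w) * p \<gamma> n + (2 - w) * ((49/100) * (w * m))"
    by (rule distrib_left)
  also have "\<dots> \<le> (2 - w) * p \<gamma> n + 2 * ((49/100) * (w * m))"
    using w wm nonneg(1) by (intro add_left_mono mult_right_mono) auto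
  also have "\<dots> \<le> 1 - (2/100) * (w * m)"
    using mu_mult_le_one_minus_p[OF assms(1) _ w(1), of n] assms(2) unfolding m_def by simp
  also have "\<dots> \<le> 1 - (2/100) * b"
    using wm by simp
  also have "\<dots> = 1 - \<gamma> / (25 * (2*\<gamma> + 1) * (2 + 3*\<gamma>)^2)"
    unfolding b_def by simp
  finally show ?thesis .
qed

theorem propositionA1:
  fixes \<gamma> :: real
  assumes "\<gamma> > 0"
  shows "\<exists>\<alpha> :: nat \<Rightarrow> real. (\<forall>n\<ge>2. \<alpha> n > 0) \<and> \<alpha> 1 = 0 \<and>
    (\<exists>c < 1. \<forall>n\<ge>2. (1 + 2 * nu \<gamma> n) *
        (p \<gamma> n + \<bar>q \<gamma> n\<bar> / \<alpha> n + \<bar>q \<gamma> (n - 1)\<bar> * \<alpha> (n - 1)) \<le> c)"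
proof (intro exI conjI)
  define c where "c = max (1 - 1/150) (1 - \<gamma> / (25 * (2*\<gamma> + 1) * (2 + 3*\<gamma>)^2))"
  show "\<forall>n\<ge>2. alpha \<gamma> n > 0"
    using alpha_pos[OF assms] by blast
  show "alpha \<gamma> 1 = 0"
    by (simp add: alpha_def)
  show "c < 1"
    unfolding c_def using assms by simp
  show "\<forall>n\<ge>2. (1 + 2 * nu \<gamma> n) *
      (p \<gamma> n + \<bar>q \<gamma> n\<bar> / alpha \<gamma> n + \<bar>q \<gamma> (n - 1)\<bar> * alpha \<gamma> (n - 1)) \<le> c"
  proof (intro allI impI)
    fix n :: nat
    assume "n \<ge> 2"
    then show "(1 + 2 * nu \<gamma> n) *
        (p \<gamma> n + \<bar>q \<gamma> n\<bar> / alpha \<gamma> n + \<bar>q \<gamma> (n - 1)\<bar> * alpha \<gamma> (n - 1)) \<le> c"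
      using odd_row_le[OF assms] even_row_le[OF assms] unfolding c_def
      by (cases "even n") (simp_all add: le_max_iff_disj)
  qed
qed

end
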